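(* Let $F$ be a partially colored forest. If Alice can win the $3$-Reduced Coloring Game on $\mathcal{R}'(F)$, then Alice can win the $3$-coloring game on $F$.
   Context: A partial coloring assigns to some vertices colors from a set $C$ of $3$ colors so that adjacent colored vertices differ; a color is legal for an uncolored vertex $v$ if no neighbor of $v$ has it. The $k$-coloring game on a partially colored graph: Alice and Bob alternate, Alice first, each coloring an uncolored vertex with a legal color from a $k$-set of colors; Bob wins if at some point an uncolored vertex has no legal color, Alice wins if all vertices get colored. The $k$-Reduced Coloring Game ($k$-RCG) is the same except that: Alice may only color vertices of degree at least $k$; Alice wins once every vertex of degree at least $k$ is colored; Bob plays first; and Bob may pass. For a partially colored forest $F$, a trunk of $F$ is a maximal connected subgraph $R$ such that every colored vertex of $R$ is a leaf of $R$; $\mathcal{R}(F)$ is the partially colored forest formed by the disjoint union of all trunks of $F$ (a colored vertex lying in several trunks appears as a separate colored copy in each). For a graph $G$, $E_{>2}(G)$ is the set of edges $xy$ of $G$ with $d_G(x)>2$ or $d_G(y)>2$. The reduced graph of $F$ is $\mathcal{R}'(F)=\mathcal{R}(F)-\{xy: xy\notin E_{>2}(\mathcal{R}(F))\}$, i.e. $\mathcal{R}(F)$ with every edge both of whose endpoints have degree at most $2$ in $\mathcal{R}(F)$ deleted. *)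

theory Defs
  imports Main
begin

definition simple_graph :: "'v set \<Rightarrow> 'v set set \<Rightarrow> bool" where
  "simple_graph V E \<longleftrightarrow> finite V \<and>
     (\<forall>e\<in>E. \<exists>x y. x \<in> V \<and> y \<in> V \<and> x \<noteq> y \<and> e = {x, y})"

definition nbrs :: "'v set set \<Rightarrow> 'v \<Rightarrow> 'v set" where
  "nbrs E v = {u. {u, v} \<in> E}"

definition deg :: "'v set set \<Rightarrow> 'v \<Rightarrow> nat" where
  "deg E v = card (nbrs E v)"

definition is_cycle :: "'v set set \<Rightarrow> 'v list \<Rightarrow> bool" where
  "is_cycle E xs \<longleftrightarrow> length xs \<ge> 3 \<and> distinct xs \<and>
     (\<forall>i. Suc i < length xs \<longrightarrow> {xs ! i, xs ! Suc i} \<in> E) \<and> {last xs, hd xs} \<in> E"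

definition forest :: "'v set \<Rightarrow> 'v set set \<Rightarrow> bool" where
  "forest V E \<longleftrightarrow> simple_graph V E \<and> \<not> (\<exists>xs. is_cycle E xs)"

definition partial_coloring :: "'v set \<Rightarrow> 'v set set \<Rightarrow> 'c set \<Rightarrow> ('v \<Rightarrow> 'c option) \<Rightarrow> bool" where
  "partial_coloring V E C col \<longleftrightarrow>
     (\<forall>v a. col v = Some a \<longrightarrow> v \<in> V \<and> a \<in> C) \<and>
     (\<forall>x y. {x, y} \<in> E \<longrightarrow> x \<noteq> y \<longrightarrow> col x \<noteq> None \<longrightarrow> col x \<noteq> col y)"

definition legal :: "'v set set \<Rightarrow> 'c set \<Rightarrow> ('v \<Rightarrow> 'c option) \<Rightarrow> 'v \<Rightarrow> 'c \<Rightarrow> bool" where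
  "legal E C col v a \<longleftrightarrow> a \<in> C \<and> (\<forall>u\<in>nbrs E v. col u \<noteq> Some a)"

definition blocked :: "'v set \<Rightarrow> 'v set set \<Rightarrow> 'c set \<Rightarrow> ('v \<Rightarrow> 'c option) \<Rightarrow> bool" where
  "blocked V E C col \<longleftrightarrow> (\<exists>v\<in>V. col v = None \<and> (\<forall>a. \<not> legal E C col v a))"

text \<open>cg_win V E C t col: Alice has a winning strategy in the coloring game with color set C
  from position col, where t = True means Alice is to move and t = False means Bob is to move.\<close>
inductive cg_win :: "'v set \<Rightarrow> 'v set set \<Rightarrow> 'c set \<Rightarrow> bool \<Rightarrow> ('v \<Rightarrow> 'c option) \<Rightarrow> bool"
  for V E C where
  cg_done: "\<not> blocked V E C col \<Longrightarrow> (\<forall>v\<in>V. col v \<noteq> None) \<Longrightarrow> cg_win V E C t col"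
| cg_alice: "\<not> blocked V E C col \<Longrightarrow> v \<in> V \<Longrightarrow> col v = None \<Longrightarrow> legal E C col v a \<Longrightarrow>
     cg_win V E C False (col(v := Some a)) \<Longrightarrow> cg_win V E C True col"
| cg_bob: "\<not> blocked V E C col \<Longrightarrow> \<not> (\<forall>v\<in>V. col v \<noteq> None) \<Longrightarrow>
     (\<forall>v a. v \<in> V \<longrightarrow> col v = None \<longrightarrow> legal E C col v a \<longrightarrow>
        cg_win V E C True (col(v := Some a))) \<Longrightarrow> cg_win V E C False col"

text \<open>The k-Reduced Coloring Game: Alice may only color vertices of degree at least k,
  Alice wins once all vertices of degree at least k are colored, Bob may pass.
  t = True: Alice to move; t = False: Bob to move.\<close>
inductive rcg_win :: "nat \<Rightarrow> 'v set \<Rightarrow> 'v set set \<Rightarrow> 'c set \<Rightarrow> bool \<Rightarrow> ('v \<Rightarrow> 'c option) \<Rightarrow> bool"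
  for k V E C where
  rcg_done: "\<not> blocked V E C col \<Longrightarrow> (\<forall>v\<in>V. k \<le> deg E v \<longrightarrow> col v \<noteq> None) \<Longrightarrow>
     rcg_win k V E C t col"
| rcg_alice: "\<not> blocked V E C col \<Longrightarrow> v \<in> V \<Longrightarrow> k \<le> deg E v \<Longrightarrow> col v = None \<Longrightarrow>
     legal E C col v a \<Longrightarrow> rcg_win k V E C False (col(v := Some a)) \<Longrightarrow> rcg_win k V E C True col"
| rcg_bob: "\<not> blocked V E C col \<Longrightarrow> \<not> (\<forall>v\<in>V. k \<le> deg E v \<longrightarrow> col v \<noteq> None) \<Longrightarrow>
     rcg_win k V E C True col \<Longrightarrow>
     (\<forall>v a. v \<in> V \<longrightarrow> col v = None \<longrightarrow> legal E C col v a \<longrightarrow>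
        rcg_win k V E C True (col(v := Some a))) \<Longrightarrow> rcg_win k V E C False col"

definition alice_wins_cg :: "'v set \<Rightarrow> 'v set set \<Rightarrow> 'c set \<Rightarrow> ('v \<Rightarrow> 'c option) \<Rightarrow> bool" where
  "alice_wins_cg V E C col \<longleftrightarrow> cg_win V E C True col"

definition alice_wins_rcg :: "nat \<Rightarrow> 'v set \<Rightarrow> 'v set set \<Rightarrow> 'c set \<Rightarrow> ('v \<Rightarrow> 'c option) \<Rightarrow> bool" where
  "alice_wins_rcg k V E C col \<longleftrightarrow> rcg_win k V E C False col"

definition induced_edges :: "'v set set \<Rightarrow> 'v set \<Rightarrow> 'v set set" where
  "induced_edges E W = {e \<in> E. e \<subseteq> W}"

definition connected_on :: "'v set set \<Rightarrow> 'v set \<Rightarrow> bool" where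
  "connected_on E W \<longleftrightarrow> W \<noteq> {} \<and>
     (\<forall>x\<in>W. \<forall>y\<in>W. (x, y) \<in> {(a, b). a \<in> W \<and> b \<in> W \<and> {a, b} \<in> E}\<^sup>*)"

text \<open>Vertex sets of connected (necessarily induced, since F is a forest) subgraphs in which
  every colored vertex is a leaf (degree exactly 1).\<close>
definition trunk_candidate :: "'v set \<Rightarrow> 'v set set \<Rightarrow> ('v \<Rightarrow> 'c option) \<Rightarrow> 'v set \<Rightarrow> bool" where
  "trunk_candidate V E col W \<longleftrightarrow> W \<subseteq> V \<and> connected_on E W \<and>
     (\<forall>v\<in>W. col v \<noteq> None \<longrightarrow> deg (induced_edges E W) v = 1)"

definition trunk :: "'v set \<Rightarrow> 'v set set \<Rightarrow> ('v \<Rightarrow> 'c option) \<Rightarrow> 'v set \<Rightarrow> bool" where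
  "trunk V E col W \<longleftrightarrow> trunk_candidate V E col W \<and>
     (\<forall>W'. trunk_candidate V E col W' \<longrightarrow> W \<subseteq> W' \<longrightarrow> W' = W)"

text \<open>R(F): disjoint union of the trunks; vertex v of trunk W becomes (W, v).\<close>
definition RV :: "'v set \<Rightarrow> 'v set set \<Rightarrow> ('v \<Rightarrow> 'c option) \<Rightarrow> ('v set \<times> 'v) set" where
  "RV V E col = {(W, v). trunk V E col W \<and> v \<in> W}"

definition RE :: "'v set \<Rightarrow> 'v set set \<Rightarrow> ('v \<Rightarrow> 'c option) \<Rightarrow> ('v set \<times> 'v) set set" where
  "RE V E col = {{(W, x), (W, y)} | W x y. trunk V E col W \<and> x \<in> W \<and> y \<in> W \<and> {x, y} \<in> E}"

definition Rcol :: "('v \<Rightarrow> 'c option) \<Rightarrow> ('v set \<times> 'v) \<Rightarrow> 'c option" where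
  "Rcol col = (\<lambda>(W, v). col v)"

definition R'E :: "'v set \<Rightarrow> 'v set set \<Rightarrow> ('v \<Rightarrow> 'c option) \<Rightarrow> ('v set \<times> 'v) set set" where
  "R'E V E col = {e \<in> RE V E col. \<exists>p\<in>e. deg (RE V E col) p > 2}"

end

(*
  Alice copies a winning strategy for the 3-RCG on R'(F).  An uncolored vertex v of F lies in exactly
  one trunk W, and its neighbours in R(F) are the copies in W of its neighbours in F; if
  deg v >= 3 then all these edges survive in R'(F).  Giving every copy of a vertex its current color
  in F, legal moves of Bob in F become legal moves in the RCG, and Alice's RCG moves (all on
  vertices of degree >= 3) become legal moves in F.  Once the RCG is won, every uncolored vertex of
  F has degree at most 2, so with 3 colors it can never be blocked, and Alice wins however play
  continues.
*)
theory Submission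
  imports Defs "HOL-Library.Transitive_Closure_Table"
begin

lemma nbrs_induced_edges: "nbrs (induced_edges E W) c = {x \<in> W. {x, c} \<in> E \<and> c \<in> W}"
  by (auto simp: nbrs_def induced_edges_def)

lemma simple_graph_edgeD:
  assumes "simple_graph V E" and "{u, v} \<in> E"
  shows "u \<in> V" and "v \<in> V" and "u \<noteq> v"
  using assms by (auto simp: simple_graph_def doubleton_eq_iff)

lemma simple_graph_finite_nbrs: "simple_graph V E \<Longrightarrow> finite (nbrs E v)"
  by (rule finite_subset[of _ V]) (auto simp: nbrs_def dest: simple_graph_edgeD, simp add: simple_graph_def)

lemma forest_finite_nbrs: "forest V E \<Longrightarrow> finite (nbrs E v)"
  by (meson forest_def simple_graph_finite_nbrs)

lemma connected_on_insert:
  assumes W: "connected_on E W" and "v \<in> W" and "{u, v} \<in> E"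
  shows "connected_on E (insert u W)"
proof -
  let ?R = "\<lambda>W. {(a, b). a \<in> W \<and> b \<in> W \<and> {a, b} \<in> E}"
  have "(?R W)\<^sup>* \<subseteq> (?R (insert u W))\<^sup>*" by (rule rtrancl_mono) auto
  moreover have "(u, v) \<in> ?R (insert u W)" "(v, u) \<in> ?R (insert u W)"
    using assms by (auto simp: insert_commute)
  ultimately have "(x, v) \<in> (?R (insert u W))\<^sup>*" "(v, x) \<in> (?R (insert u W))\<^sup>*"
    if "x \<in> insert u W" for x
    using that W \<open>v \<in> W\<close> unfolding connected_on_def by blast+
  then show ?thesis unfolding connected_on_def by (blast intro: rtrancl_trans)
qed

lemma forest_edge_is_bridge:
  assumes "forest V E" and ab: "{a, b} \<in> E"
  shows "(a, b) \<notin> {(p, q). {p, q} \<in> E \<and> {p, q} \<noteq> {a, b}}\<^sup>*"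
proof
  let ?R = "\<lambda>p q. {p, q} \<in> E \<and> {p, q} \<noteq> {a, b}"
  assume "(a, b) \<in> {(p, q). ?R p q}\<^sup>*"
  then obtain xs where "rtrancl_path ?R a xs b"
    by (auto simp: rtranclp_rtrancl_eq[symmetric] rtranclp_eq_rtrancl_path)
  then obtain xs where path: "rtrancl_path ?R a xs b" and "distinct (a # xs)"
    by (rule rtrancl_path_distinct)
  have "a \<noteq> b" using assms by (meson forest_def simple_graph_edgeD(3))
  then have "xs \<noteq> []" using path by (auto elim: rtrancl_path.cases)
  have "xs \<noteq> [b]" using path by (auto elim!: rtrancl_path.cases)
  have "is_cycle E (a # xs)"
    unfolding is_cycle_def
  proof (intro conjI allI impI)
    show "3 \<le> length (a # xs)" using \<open>xs \<noteq> []\<close> \<open>xs \<noteq> [b]\<close> rtrancl_path_last[OF path]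
      by (cases xs rule: rev_cases) (auto simp: Suc_le_eq)
    show "distinct (a # xs)" by fact
    show "{(a # xs) ! i, (a # xs) ! Suc i} \<in> E" if "Suc i < length (a # xs)" for i
      using rtrancl_path_nth[OF path, of i] that by simp
    show "{last (a # xs), hd (a # xs)} \<in> E"
      using ab rtrancl_path_last[OF path \<open>xs \<noteq> []\<close>] \<open>xs \<noteq> []\<close> by (simp add: insert_commute)
  qed
  then show False using \<open>forest V E\<close> by (auto simp: forest_def)
qed

lemma forest_connected_on_unique_nbr:
  assumes "forest V E" and W: "connected_on E W" and "u \<notin> W" and "v \<in> W" and "x \<in> W"
    and uv: "{u, v} \<in> E" and ux: "{u, x} \<in> E"
  shows "x = v"
proof (rule ccontr)
  let ?R = "{(p, q). {p, q} \<in> E \<and> {p, q} \<noteq> {u, v}}"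
  assume "x \<noteq> v"
  have "{(a, b). a \<in> W \<and> b \<in> W \<and> {a, b} \<in> E} \<subseteq> ?R"
    using \<open>u \<notin> W\<close> by (auto simp: doubleton_eq_iff)
  then have "(x, v) \<in> ?R\<^sup>*"
    using W \<open>v \<in> W\<close> \<open>x \<in> W\<close> rtrancl_mono unfolding connected_on_def by blast
  moreover have "(u, x) \<in> ?R" using ux \<open>x \<noteq> v\<close> by (auto simp: doubleton_eq_iff)
  ultimately have "(u, v) \<in> ?R\<^sup>*" by (blast intro: converse_rtrancl_into_rtrancl)
  then show False using forest_edge_is_bridge[OF \<open>forest V E\<close> uv] by simp
qed

lemma trunk_exists:
  assumes "finite V" and "v \<in> V" and "col v = None"
  obtains W where "trunk V E col W" and "v \<in> W"
proof -
  let ?S = "{W. trunk_candidate V E col W \<and> v \<in> W}"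
  have "finite ?S"
    using \<open>finite V\<close> unfolding trunk_candidate_def by (simp add: finite_subset[of _ "Pow V"])
  moreover have "{v} \<in> ?S"
    using assms(2,3) by (auto simp: trunk_candidate_def connected_on_def)
  ultimately obtain W where "W \<in> ?S" and "\<forall>W'\<in>?S. W \<subseteq> W' \<longrightarrow> W = W'"
    using finite_has_maximal by blast
  then have "trunk V E col W" by (auto simp: trunk_def)
  with \<open>W \<in> ?S\<close> show thesis using that by blast
qed

lemma trunk_colored_nbr_unique:
  assumes "trunk V E col W" and "c \<in> W" and "col c \<noteq> None"
    and "a \<in> W" "{a, c} \<in> E" and "b \<in> W" "{b, c} \<in> E"
  shows "a = b"
proof -
  have "deg (induced_edges E W) c = 1"
    using assms(1-3) unfolding trunk_def trunk_candidate_def by blast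
  then obtain z where z: "nbrs (induced_edges E W) c = {z}"
    unfolding deg_def by (rule card_1_singletonE)
  have "a \<in> nbrs (induced_edges E W) c" "b \<in> nbrs (induced_edges E W) c"
    using assms(2,4-7) unfolding nbrs_induced_edges by blast+
  then show ?thesis using z by simp
qed

lemma trunk_reachable_through_uncolored:
  assumes W: "trunk V E col W" and "v \<in> W" "col v = None" and "q \<in> W"
  shows "(v, q) \<in> {(a, b). a \<in> W \<and> b \<in> W \<and> {a, b} \<in> E \<and> col a = None}\<^sup>*"
proof -
  let ?walk = "{(a, b). a \<in> W \<and> b \<in> W \<and> {a, b} \<in> E}"
  let ?S = "{(a, b). a \<in> W \<and> b \<in> W \<and> {a, b} \<in> E \<and> col a = None}"
  have "(v, q) \<in> ?walk\<^sup>*"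
    using assms unfolding trunk_def trunk_candidate_def connected_on_def by blast
  then show ?thesis
  proof (induction rule: rtrancl_induct)
    case (step y z)
    show ?case
    proof (cases "col y = None")
      case True
      with step show ?thesis by (auto intro: rtrancl_into_rtrancl)
    next
      case False
      \<comment> \<open>A colored vertex is a leaf of \<open>W\<close>, so the walk can only turn back.\<close>
      then have "y \<noteq> v" using \<open>col v = None\<close> by auto
      with step.IH obtain w where "(v, w) \<in> ?S\<^sup>*" "(w, y) \<in> ?S"
        by (auto elim: rtranclE)
      moreover have "w = z"
      proof -
        have "{z, y} \<in> E" "z \<in> W" "y \<in> W" using step.hyps(2) by (auto simp: insert_commute)
        then show ?thesis
          using trunk_colored_nbr_unique[OF W \<open>y \<in> W\<close> False] \<open>(w, y) \<in> ?S\<close> by blast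
      qed
      ultimately show ?thesis by simp
    qed
  qed simp
qed

lemma nbrs_RE_trunk:
  assumes "trunk V E col W" and "v \<in> W"
  shows "nbrs (RE V E col) (W, v) = Pair W ` {u \<in> W. {u, v} \<in> E}"
proof (intro set_eqI iffI)
  fix q assume "q \<in> nbrs (RE V E col) (W, v)"
  then obtain W' x y where "{q, (W, v)} = {(W', x), (W', y)}" "x \<in> W'" "y \<in> W'" "{x, y} \<in> E"
    by (auto simp: nbrs_def RE_def)
  then show "q \<in> Pair W ` {u \<in> W. {u, v} \<in> E}"
    by (auto simp: doubleton_eq_iff insert_commute)
next
  fix q assume "q \<in> Pair W ` {u \<in> W. {u, v} \<in> E}"
  then obtain u where "q = (W, u)" "u \<in> W" "{u, v} \<in> E" by auto
  with assms show "q \<in> nbrs (RE V E col) (W, v)"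
    unfolding nbrs_def RE_def by blast
qed

lemma nbrs_R'E_subset: "nbrs (R'E V E col) q \<subseteq> nbrs (RE V E col) q"
  by (auto simp: nbrs_def R'E_def)

lemma nbrs_R'E_eq_if_deg_gt_2:
  "2 < deg (RE V E col) q \<Longrightarrow> nbrs (R'E V E col) q = nbrs (RE V E col) q"
  by (auto simp: nbrs_def R'E_def)

context
  fixes V :: "'v set" and E :: "'v set set" and col :: "'v \<Rightarrow> 'c option"
  assumes forest: "forest V E"
begin

lemma trunk_nbr_mem:
  assumes W: "trunk V E col W" and "v \<in> W" "col v = None" and uv: "{u, v} \<in> E"
  shows "u \<in> W"
proof (rule ccontr)
  assume "u \<notin> W"
  have cand: "trunk_candidate V E col W" using W by (simp add: trunk_def)
  then have conn: "connected_on E W" by (simp add: trunk_candidate_def)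
  have unique: "x = v" if "x \<in> W" "{x, u} \<in> E" for x
    using forest_connected_on_unique_nbr[OF forest conn \<open>u \<notin> W\<close> \<open>v \<in> W\<close> that(1) uv]
      that(2) by (simp add: insert_commute)
  have "u \<in> V" using forest uv simple_graph_edgeD(1) unfolding forest_def by metis
  have "deg (induced_edges E (insert u W)) c = 1"
    if c: "c \<in> insert u W" "col c \<noteq> None" for c
  proof (cases "c = u")
    case True
    have "nbrs (induced_edges E (insert u W)) c = {v}"
    proof -
      have vu: "{v, u} \<in> E" using uv by (simp add: insert_commute)
      have "{u} \<notin> E" using forest simple_graph_edgeD(3)[of V E u u] by (auto simp: forest_def)
      then show ?thesis using True vu \<open>v \<in> W\<close> by (auto simp: nbrs_induced_edges dest: unique)
    qed
    then show ?thesis by (simp add: deg_def)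
  next
    case False
    then have "c \<in> W" "c \<noteq> v" using c \<open>col v = None\<close> by auto
    then have "nbrs (induced_edges E (insert u W)) c = nbrs (induced_edges E W) c"
      using unique[of c] by (auto simp: nbrs_induced_edges insert_commute)
    then show ?thesis using cand \<open>c \<in> W\<close> c(2) by (simp add: trunk_candidate_def deg_def)
  qed
  then have "trunk_candidate V E col (insert u W)"
    using cand connected_on_insert[OF conn \<open>v \<in> W\<close> uv] \<open>u \<in> V\<close>
    unfolding trunk_candidate_def by blast
  then show False using W \<open>u \<notin> W\<close> by (auto simp: trunk_def)
qed

lemma trunk_unique:
  assumes W1: "trunk V E col W1" and W2: "trunk V E col W2"
    and "v \<in> W1" "v \<in> W2" "col v = None"
  shows "W1 = W2"
proof -
  have "q \<in> W2" if "q \<in> W1" for q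
    using trunk_reachable_through_uncolored[OF W1 \<open>v \<in> W1\<close> \<open>col v = None\<close> that]
  proof (induction rule: rtrancl_induct)
    case (step y z)
    then have "{z, y} \<in> E" by (auto simp: insert_commute)
    with step show ?case using trunk_nbr_mem[OF W2] by blast
  qed (fact \<open>v \<in> W2\<close>)
  then have "W1 \<subseteq> W2" by blast
  then show ?thesis using W1 W2 by (auto simp: trunk_def)
qed

lemma nbrs_RE_trunk_uncolored:
  assumes "trunk V E col W" and "v \<in> W" and "col v = None"
  shows "nbrs (RE V E col) (W, v) = Pair W ` nbrs E v"
proof -
  have "{u \<in> W. {u, v} \<in> E} = nbrs E v"
    using trunk_nbr_mem[OF assms] by (auto simp: nbrs_def)
  then show ?thesis using nbrs_RE_trunk[OF assms(1,2)] by simp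
qed

lemma nbrs_R'E_trunk_uncolored:
  assumes "trunk V E col W" and "v \<in> W" and "col v = None" and "3 \<le> deg E v"
  shows "nbrs (R'E V E col) (W, v) = Pair W ` nbrs E v"
proof -
  have "deg (RE V E col) (W, v) = deg E v"
    using nbrs_RE_trunk_uncolored[OF assms(1-3)] by (simp add: deg_def card_image inj_on_def)
  then show ?thesis
    using nbrs_R'E_eq_if_deg_gt_2[of V E col "(W, v)"] nbrs_RE_trunk_uncolored[OF assms(1-3)] assms(4) by simp
qed

lemma deg_R'E_trunk_uncolored_ge_3_iff:
  assumes "trunk V E col W" and "v \<in> W" and "col v = None"
  shows "3 \<le> deg (R'E V E col) (W, v) \<longleftrightarrow> 3 \<le> deg E v"
proof
  have "deg (R'E V E col) (W, v) \<le> card (Pair W ` nbrs E v)"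
    using card_mono[OF _ nbrs_R'E_subset[of V E col "(W, v)"]] nbrs_RE_trunk_uncolored[OF assms]
      forest_finite_nbrs[OF forest] by (simp add: deg_def)
  also have "\<dots> = deg E v" by (simp add: deg_def card_image inj_on_def)
  finally have "deg (R'E V E col) (W, v) \<le> deg E v" .
  then show "3 \<le> deg (R'E V E col) (W, v) \<Longrightarrow> 3 \<le> deg E v" by simp
next
  show "3 \<le> deg E v \<Longrightarrow> 3 \<le> deg (R'E V E col) (W, v)"
    using nbrs_R'E_trunk_uncolored[OF assms] by (simp add: deg_def card_image inj_on_def)
qed

end

lemma legal_transfer:
  assumes "legal E C c v a" and "\<And>q. q \<in> nbrs E' w \<Longrightarrow> \<exists>u\<in>nbrs E v. p q = c u"
  shows "legal E' C p w a"
  using assms unfolding legal_def by metis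

lemma legal_exists_if_deg_less_card:
  assumes "finite (nbrs E v)" and "deg E v < card C"
  shows "\<exists>a. legal E C c v a"
proof -
  let ?used = "(\<lambda>u. the (c u)) ` nbrs E v"
  have "card ?used < card C"
    using card_image_le[OF assms(1)] assms(2) unfolding deg_def by (meson le_less_trans)
  then have "\<not> C \<subseteq> ?used"
    using card_mono[OF finite_imageI[OF assms(1)]] by (meson not_le)
  then obtain a where "a \<in> C" "a \<notin> ?used" by blast
  then have "legal E C c v a" unfolding legal_def by force
  then show ?thesis ..
qed

lemma cg_win_if_uncolored_deg_less_card:
  assumes "simple_graph V E" and "\<forall>v\<in>V. c v = None \<longrightarrow> deg E v < card C"
  shows "cg_win V E C t c"
  using assms(2)
proof (induction "card {v \<in> V. c v = None}" arbitrary: c t rule: less_induct)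
  case less
  have not_blocked: "\<not> blocked V E C c"
    using less.prems legal_exists_if_deg_less_card[OF simple_graph_finite_nbrs[OF assms(1)], of _ C c]
    by (auto simp: blocked_def)
  have move: "cg_win V E C t' (c(v := Some a))" if "v \<in> V" "c v = None" for v a t'
  proof (rule less.hyps)
    have "finite {v \<in> V. c v = None}" using assms(1) by (simp add: simple_graph_def)
    then have "card ({x \<in> V. c x = None} - {v}) < card {x \<in> V. c x = None}"
      using that by (intro card_Diff1_less) auto
    moreover have "{x \<in> V. (c(v := Some a)) x = None} = {x \<in> V. c x = None} - {v}" by auto
    ultimately show "card {x \<in> V. (c(v := Some a)) x = None} < card {x \<in> V. c x = None}"
      by simp
    show "\<forall>x\<in>V. (c(v := Some a)) x = None \<longrightarrow> deg E x < card C" using less.prems by simp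
  qed
  show ?case
  proof (cases "\<forall>v\<in>V. c v \<noteq> None")
    case True
    then show ?thesis by (rule cg_done[OF not_blocked])
  next
    case False
    then obtain v where v: "v \<in> V" "c v = None" by blast
    then obtain a where "legal E C c v a"
      using less.prems legal_exists_if_deg_less_card[OF simple_graph_finite_nbrs[OF assms(1)], of v C c]
      by blast
    then have "cg_win V E C True c" by (rule cg_alice[OF not_blocked v _ move[OF v]])
    moreover have "cg_win V E C False c" by (rule cg_bob[OF not_blocked False]) (simp add: move)
    ultimately show ?thesis by (cases t) simp_all
  qed
qed

text \<open>Bob may pass his first move, so Alice may just as well start.\<close>

lemma rcg_win_True_if_False:
  assumes "rcg_win k V E C False col"
  shows "rcg_win k V E C True col"
  using assms by cases (auto intro: rcg_done)

text \<open>
  \<open>c\<close> is a position of the coloring game on \<open>F\<close> (so it extends \<open>col\<close>) and \<open>p\<close> the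
  corresponding position on \<open>R'(F)\<close>, where every copy of a vertex carries its color under \<open>c\<close>.
\<close>
definition mirrored ::
  "'v set \<Rightarrow> 'v set set \<Rightarrow> ('v \<Rightarrow> 'c option) \<Rightarrow> ('v set \<times> 'v \<Rightarrow> 'c option) \<Rightarrow> ('v \<Rightarrow> 'c option) \<Rightarrow> bool"
  where "mirrored V E col p c \<longleftrightarrow>
    (\<forall>v. c v = None \<longrightarrow> col v = None) \<and> (\<forall>W v. (W, v) \<in> RV V E col \<longrightarrow> p (W, v) = c v)"

context
  fixes V :: "'v set" and E :: "'v set set" and C :: "'c set" and col :: "'v \<Rightarrow> 'c option"
  assumes forest: "forest V E" and three_colors: "card C = 3"
begin

lemma mirrored_uncolored_vertex:
  assumes "mirrored V E col p c" and "v \<in> V" and "c v = None"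
  obtains W where "trunk V E col W" "v \<in> W" "col v = None" "(W, v) \<in> RV V E col" "p (W, v) = None"
proof -
  have "col v = None" using assms by (simp add: mirrored_def)
  moreover have "finite V" using forest by (simp add: forest_def simple_graph_def)
  ultimately obtain W where "trunk V E col W" "v \<in> W"
    using trunk_exists[OF _ \<open>v \<in> V\<close>] by blast
  with assms \<open>col v = None\<close> show thesis using that by (simp add: mirrored_def RV_def)
qed

lemma uncolored_deg_less_3_if_mirrored:
  assumes "mirrored V E col p c"
    and "\<forall>w\<in>RV V E col. 3 \<le> deg (R'E V E col) w \<longrightarrow> p w \<noteq> None"
    and "v \<in> V" and "c v = None"
  shows "deg E v < 3"
proof -
  obtain W where W: "trunk V E col W" "v \<in> W" "col v = None"
    and "(W, v) \<in> RV V E col" "p (W, v) = None"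
    by (rule mirrored_uncolored_vertex[OF assms(1,3,4)])
  then have "\<not> 3 \<le> deg (R'E V E col) (W, v)" using assms(2) by auto
  then show ?thesis using deg_R'E_trunk_uncolored_ge_3_iff[OF forest W] by simp
qed

lemma mirrored_update:
  assumes "mirrored V E col p c" and "trunk V E col W" "v \<in> W" "col v = None"
  shows "mirrored V E col (p((W, v) := Some a)) (c(v := Some a))"
proof -
  have "W' = W" if "trunk V E col W'" "v \<in> W'" for W'
    using trunk_unique[OF forest that(1) assms(2) that(2) \<open>v \<in> W\<close> \<open>col v = None\<close>] .
  then show ?thesis using assms(1) by (auto simp: mirrored_def RV_def)
qed

lemma legal_of_legal_R'E:
  assumes "mirrored V E col p c" and W: "trunk V E col W" "v \<in> W" "col v = None"
    and "3 \<le> deg E v" and "legal (R'E V E col) C p (W, v) a"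
  shows "legal E C c v a"
proof (rule legal_transfer[OF assms(6)])
  fix u assume "u \<in> nbrs E v"
  then have "(W, u) \<in> nbrs (R'E V E col) (W, v)" and "u \<in> W"
    using nbrs_R'E_trunk_uncolored[OF forest W assms(5)] trunk_nbr_mem[OF forest W]
    by (auto simp: nbrs_def)
  moreover have "c u = p (W, u)" using assms(1) W \<open>u \<in> W\<close> by (simp add: mirrored_def RV_def)
  ultimately show "\<exists>q\<in>nbrs (R'E V E col) (W, v). c u = p q" by blast
qed

lemma legal_R'E_of_legal:
  assumes "mirrored V E col p c" and W: "trunk V E col W" "v \<in> W" and "legal E C c v a"
  shows "legal (R'E V E col) C p (W, v) a"
proof (rule legal_transfer[OF assms(4)])
  fix q assume "q \<in> nbrs (R'E V E col) (W, v)"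
  then have "q \<in> nbrs (RE V E col) (W, v)" using nbrs_R'E_subset[of V E col "(W, v)"] by blast
  then obtain u where "q = (W, u)" "u \<in> W" "{u, v} \<in> E"
    unfolding nbrs_RE_trunk[OF W] by blast
  then show "\<exists>u\<in>nbrs E v. p q = c u"
    using assms(1) W by (auto simp: mirrored_def RV_def nbrs_def)
qed

lemma not_blocked_if_mirrored:
  assumes "\<not> blocked (RV V E col) (R'E V E col) C p" and "mirrored V E col p c"
  shows "\<not> blocked V E C c"
proof
  assume "blocked V E C c"
  then obtain v where v: "v \<in> V" "c v = None" and no_legal: "\<forall>a. \<not> legal E C c v a"
    by (auto simp: blocked_def)
  obtain W where W: "trunk V E col W" "v \<in> W" "col v = None"
    and "(W, v) \<in> RV V E col" "p (W, v) = None"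
    by (rule mirrored_uncolored_vertex[OF assms(2) v])
  show False
  proof (cases "3 \<le> deg E v")
    case True
    obtain a where "legal (R'E V E col) C p (W, v) a"
      using assms(1) \<open>(W, v) \<in> RV V E col\<close> \<open>p (W, v) = None\<close> by (auto simp: blocked_def)
    then show False using legal_of_legal_R'E[OF assms(2) W True] no_legal by blast
  next
    case False
    then show False
      using legal_exists_if_deg_less_card[OF forest_finite_nbrs[OF forest], of v C c]
        three_colors no_legal by simp
  qed
qed

lemma mirrored_Alice_move:
  assumes "mirrored V E col p c" and "(W, v) \<in> RV V E col" and "3 \<le> deg (R'E V E col) (W, v)"
    and "p (W, v) = None" and "legal (R'E V E col) C p (W, v) a"
  shows "v \<in> V" and "c v = None" and "legal E C c v a"
    and "mirrored V E col (p((W, v) := Some a)) (c(v := Some a))"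
proof -
  have W: "trunk V E col W" "v \<in> W" using assms(2) by (auto simp: RV_def)
  then show "v \<in> V" by (auto simp: trunk_def trunk_candidate_def)
  show "c v = None" using assms(1,2,4) by (simp add: mirrored_def)
  then have "col v = None" using assms(1) by (simp add: mirrored_def)
  then show "legal E C c v a"
    using legal_of_legal_R'E[OF assms(1) W] assms(3,5) deg_R'E_trunk_uncolored_ge_3_iff[OF forest W]
    by simp
  show "mirrored V E col (p((W, v) := Some a)) (c(v := Some a))"
    using mirrored_update[OF assms(1) W \<open>col v = None\<close>] .
qed

lemma mirrored_Bob_move:
  assumes "mirrored V E col p c" and "v \<in> V" and "c v = None" and "legal E C c v a"
  obtains W where "(W, v) \<in> RV V E col" and "p (W, v) = None"
    and "legal (R'E V E col) C p (W, v) a"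
    and "mirrored V E col (p((W, v) := Some a)) (c(v := Some a))"
proof -
  obtain W where W: "trunk V E col W" "v \<in> W" "col v = None"
    and "(W, v) \<in> RV V E col" "p (W, v) = None"
    by (rule mirrored_uncolored_vertex[OF assms(1-3)])
  moreover have "legal (R'E V E col) C p (W, v) a"
    using legal_R'E_of_legal[OF assms(1) W(1,2) assms(4)] .
  ultimately show thesis using that mirrored_update[OF assms(1) W] by blast
qed

lemma cg_win_if_rcg_win_mirrored:
  assumes "rcg_win 3 (RV V E col) (R'E V E col) C t p" and "mirrored V E col p c"
  shows "cg_win V E C t c"
  using assms
proof (induction arbitrary: c rule: rcg_win.induct)
  case (rcg_done p t)
  have "deg E v < card C" if "v \<in> V" "c v = None" for v
    using uncolored_deg_less_3_if_mirrored[OF rcg_done.prems rcg_done.hyps(2) that] three_colors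
    by simp
  moreover have "simple_graph V E" using forest by (simp add: forest_def)
  ultimately show ?case by (intro cg_win_if_uncolored_deg_less_card) auto
next
  case (rcg_alice p w a)
  obtain W v where w: "w = (W, v)" by fastforce
  note move = mirrored_Alice_move[OF rcg_alice.prems rcg_alice.hyps(2-5)[unfolded w]]
  have "cg_win V E C False (c(v := Some a))"
    using rcg_alice.IH move(4) unfolding w .
  then show ?case
    by (rule cg_alice[OF not_blocked_if_mirrored[OF rcg_alice.hyps(1) rcg_alice.prems] move(1-3)])
next
  case (rcg_bob p)
  have not_blocked: "\<not> blocked V E C c"
    by (rule not_blocked_if_mirrored[OF rcg_bob.hyps(1) rcg_bob.prems])
  show ?case
  proof (cases "\<forall>v\<in>V. c v \<noteq> None")
    case True
    then show ?thesis by (rule cg_done[OF not_blocked])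
  next
    case False
    show ?thesis
    proof (rule cg_bob[OF not_blocked False], intro allI impI)
      fix v a assume "v \<in> V" "c v = None" "legal E C c v a"
      then obtain W where "(W, v) \<in> RV V E col" "p (W, v) = None"
        "legal (R'E V E col) C p (W, v) a"
        "mirrored V E col (p((W, v) := Some a)) (c(v := Some a))"
        by (rule mirrored_Bob_move[OF rcg_bob.prems])
      then show "cg_win V E C True (c(v := Some a))"
        using rcg_bob.IH(2) by (simp add: fun_upd_def)
    qed
  qed
qed

end

theorem lemma6p1:
  fixes V :: "'v set" and E :: "'v set set" and C :: "'c set" and col :: "'v \<Rightarrow> 'c option"
  assumes "forest V E"
    and "card C = 3"
    and "partial_coloring V E C col"
    and "alice_wins_rcg 3 (RV V E col) (R'E V E col) C (Rcol col)"
  shows "alice_wins_cg V E C col"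
proof -
  have "rcg_win 3 (RV V E col) (R'E V E col) C True (Rcol col)"
    using assms(4) by (intro rcg_win_True_if_False) (simp add: alice_wins_rcg_def)
  moreover have "mirrored V E col (Rcol col) col" by (simp add: mirrored_def Rcol_def)
  ultimately show ?thesis
    using cg_win_if_rcg_win_mirrored[OF assms(1,2)] by (simp add: alice_wins_cg_def)
qed

end
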